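(* Let $H_\theta:\mathbb{R}^n\to\mathbb{R}^D$ be injective and satisfy $\|H_\theta(x)-H_\theta(y)\|_2\ge\alpha\|x-y\|_2$ for all $x,y\in\mathbb{R}^n$, for some $\alpha\ge 0$. Let $w\in\mathbb{S}^{D-1}$ satisfy $\mathrm{dist}(w,s_\theta(\mathscr{P}))\ge\rho$. Then for all $x,y\in\mathbb{R}^n$, $$\|Q_wH_\theta(x)-Q_wH_\theta(y)\|_2\ge\frac{1}{\sqrt2}\rho\alpha\|x-y\|_2.$$
   Context: $\mathbb{S}^{D-1}$ is the unit sphere in $\mathbb{R}^D$; distances are Euclidean in $\mathbb{R}^D$. $\mathscr{P}=\{(x,y)\in\mathbb{R}^n\times\mathbb{R}^n: x\ne y\}$ and $s_\theta:\mathscr{P}\to\mathbb{S}^{D-1}$, $s_\theta(x,y)=\frac{H_\theta(x)-H_\theta(y)}{\|H_\theta(x)-H_\theta(y)\|_2}$. For a unit vector $w$, $Q_w:\mathbb{R}^D\to\mathbb{R}^D$ is $Q_w(z)=z-\langle z,w\rangle w$. *)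

theory Defs
  imports "HOL-Analysis.Analysis"
begin

definition pairs_distinct :: "('a \<times> 'a) set" where
  "pairs_distinct = {(x, y). x \<noteq> y}"

definition secant :: "('a \<Rightarrow> 'b::real_normed_vector) \<Rightarrow> 'a \<times> 'a \<Rightarrow> 'b" where
  "secant H p = (H (fst p) - H (snd p)) /\<^sub>R norm (H (fst p) - H (snd p))"

definition Qproj :: "'b::real_inner \<Rightarrow> 'b \<Rightarrow> 'b" where
  "Qproj w z = z - (inner z w) *\<^sub>R w"

end

theory Submission
  imports Defs
begin

text \<open>For unit vectors w, s with c = inner s w one has |w - s|^2 = 2 - 2c,
  |w + s|^2 = 2 + 2c and |Q_w s|^2 = 1 - c^2, so 2 |Q_w s| = |w - s| |w + s|. If w is at
  distance at least \<rho> from both s and -s, the larger factor is at least sqrt 2 (the squares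
  sum to 4) and the smaller at least \<rho>, whence |Q_w s| \<ge> \<rho> / sqrt 2. The secant set is
  symmetric under swapping the two points, so this applies to every secant s of H, and
  Q_w (H x - H y) = |H x - H y| Q_w s; the lower Lipschitz bound on H finishes the proof.\<close>

lemma Qproj_diff: "Qproj w a - Qproj w b = Qproj w (a - b)"
  by (simp add: Qproj_def inner_diff_left algebra_simps)

lemma Qproj_scaleR: "Qproj w (r *\<^sub>R a) = r *\<^sub>R Qproj w a"
  by (simp add: Qproj_def algebra_simps)

lemma norm_Qproj_squared:
  fixes w s :: "'a::real_inner"
  assumes "norm w = 1"
  shows "(norm (Qproj w s))\<^sup>2 = (norm s)\<^sup>2 - (inner s w)\<^sup>2"
proof -
  have "inner w w = 1"
    using assms by (simp add: norm_eq_sqrt_inner)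
  have "(norm (Qproj w s))\<^sup>2 = inner (s - inner s w *\<^sub>R w) (s - inner s w *\<^sub>R w)"
    unfolding Qproj_def power2_norm_eq_inner ..
  also have "\<dots> = inner s s - (inner s w)\<^sup>2"
    using \<open>inner w w = 1\<close>
    by (simp add: inner_diff_left inner_diff_right inner_commute[of w s] power2_eq_square)
  finally show ?thesis
    by (simp add: power2_norm_eq_inner)
qed

lemma norm_Qproj_unit:
  fixes w s :: "'a::real_inner"
  assumes "norm w = 1" "norm s = 1"
  shows "2 * norm (Qproj w s) = norm (w - s) * norm (w + s)"
proof -
  define c where "c = inner s w"
  have minus: "(norm (w - s))\<^sup>2 = 2 - 2 * c"
    using dot_norm_neg[of w s] assms by (simp add: c_def inner_commute)
  have plus: "(norm (w + s))\<^sup>2 = 2 + 2 * c"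
    using dot_norm[of w s] assms by (simp add: c_def inner_commute)
  have "(2 * norm (Qproj w s))\<^sup>2 = (norm (w - s) * norm (w + s))\<^sup>2"
    unfolding power_mult_distrib minus plus norm_Qproj_squared[OF assms(1)]
    by (simp add: assms(2) c_def algebra_simps power2_eq_square)
  then show ?thesis
    by (rule power2_eq_imp_eq) simp_all
qed

lemma norm_Qproj_ge_antipodal_dist:
  fixes w s :: "'a::real_inner"
  assumes "norm w = 1" "norm s = 1" "\<rho> \<le> norm (w - s)" "\<rho> \<le> norm (w + s)"
  shows "\<rho> / sqrt 2 \<le> norm (Qproj w s)"
proof (cases "\<rho> \<le> 0")
  case True
  then have "\<rho> / sqrt 2 \<le> 0"
    by (simp add: divide_nonpos_pos)
  then show ?thesis
    by (rule order_trans) simp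
next
  case False
  have larger_factor: "\<rho> * sqrt 2 \<le> a * b" if "2 \<le> a\<^sup>2" "0 \<le> a" "\<rho> \<le> b" for a b :: real
  proof -
    have "sqrt 2 \<le> a"
      using real_sqrt_le_mono[OF \<open>2 \<le> a\<^sup>2\<close>] \<open>0 \<le> a\<close> by simp
    then show ?thesis
      using False \<open>\<rho> \<le> b\<close> by (simp add: mult.commute[of a] mult_mono)
  qed
  have "(norm (w - s))\<^sup>2 + (norm (w + s))\<^sup>2 = 4"
    using dot_norm[of w s] dot_norm_neg[of w s] assms(1,2) by simp
  then have "2 \<le> (norm (w - s))\<^sup>2 \<or> 2 \<le> (norm (w + s))\<^sup>2"
    by linarith
  then have "\<rho> * sqrt 2 \<le> norm (w - s) * norm (w + s)"
    using larger_factor[of "norm (w - s)" "norm (w + s)"] larger_factor[of "norm (w + s)" "norm (w - s)"]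
      assms(3,4) by (auto simp: mult.commute)
  then have "\<rho> * sqrt 2 / 2 \<le> norm (Qproj w s)"
    using norm_Qproj_unit[OF assms(1,2)] by linarith
  moreover have "\<rho> / sqrt 2 = \<rho> * sqrt 2 / 2"
    by (simp add: field_simps)
  ultimately show ?thesis
    by (simp only:)
qed

lemma secant_swap: "secant H (y, x) = - secant H (x, y)"
  by (simp add: secant_def norm_minus_commute flip: scaleR_minus_right)

lemma norm_secant: "H x \<noteq> H y \<Longrightarrow> norm (secant H (x, y)) = 1"
  by (simp add: secant_def)

lemma Qproj_diff_eq_scaleR_secant:
  "Qproj w (H x) - Qproj w (H y) = norm (H x - H y) *\<^sub>R Qproj w (secant H (x, y))"
  by (cases "H x = H y") (simp_all add: Qproj_diff Qproj_scaleR secant_def)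

lemma norm_Qproj_diff_ge_infdist_secants:
  fixes H :: "'a \<Rightarrow> 'b::real_inner"
  assumes "norm w = 1" and "\<rho> \<le> infdist w (secant H ` pairs_distinct)"
  shows "\<rho> / sqrt 2 * norm (H x - H y) \<le> norm (Qproj w (H x) - Qproj w (H y))"
proof (cases "H x = H y")
  case False
  then have "x \<noteq> y"
    by auto
  then have "(x, y) \<in> pairs_distinct" "(y, x) \<in> pairs_distinct"
    by (simp_all add: pairs_distinct_def)
  then have "\<rho> \<le> dist w (secant H (x, y))" "\<rho> \<le> dist w (secant H (y, x))"
    using assms(2) infdist_le[OF imageI, of _ _ w "secant H"] by fastforce+
  then have "\<rho> \<le> norm (w - secant H (x, y))" "\<rho> \<le> norm (w + secant H (x, y))"
    by (simp_all add: dist_norm secant_swap[of H y x])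
  then have "\<rho> / sqrt 2 \<le> norm (Qproj w (secant H (x, y)))"
    using norm_Qproj_ge_antipodal_dist assms(1) norm_secant[of H x y, OF False] by blast
  then have "norm (H x - H y) * (\<rho> / sqrt 2) \<le> norm (H x - H y) * norm (Qproj w (secant H (x, y)))"
    by (rule mult_left_mono) simp
  then show ?thesis
    by (simp add: Qproj_diff_eq_scaleR_secant mult.commute)
qed simp

theorem lemma12:
  fixes H :: "real ^ 'n \<Rightarrow> real ^ 'd"
    and \<alpha> \<rho> :: real and w :: "real ^ 'd"
  assumes "inj H"
    and "\<alpha> \<ge> 0"
    and "\<And>x y. norm (H x - H y) \<ge> \<alpha> * norm (x - y)"
    and "w \<in> sphere 0 1"
    and "infdist w (secant H ` pairs_distinct) \<ge> \<rho>"
  shows "\<forall>x y. norm (Qproj w (H x) - Qproj w (H y)) \<ge> (1 / sqrt 2) * \<rho> * \<alpha> * norm (x - y)"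
proof (intro allI)
  fix x y
  have projected: "\<rho> / sqrt 2 * norm (H x - H y) \<le> norm (Qproj w (H x) - Qproj w (H y))"
    using norm_Qproj_diff_ge_infdist_secants assms(4,5) by simp
  show "(1 / sqrt 2) * \<rho> * \<alpha> * norm (x - y) \<le> norm (Qproj w (H x) - Qproj w (H y))"
  proof (cases "\<rho> \<ge> 0")
    case True
    have "(1 / sqrt 2) * \<rho> * \<alpha> * norm (x - y) \<le> \<rho> / sqrt 2 * norm (H x - H y)"
      using assms(3)[of x y] True by (simp add: mult.assoc divide_right_mono mult_left_mono)
    with projected show ?thesis
      by linarith
  next
    case False
    then have "(1 / sqrt 2) * \<rho> * \<alpha> * norm (x - y) \<le> 0"
      using assms(2) by (simp add: mult_nonpos_nonneg divide_nonpos_pos)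
    then show ?thesis
      by (meson norm_ge_zero order_trans)
  qed
qed

end
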